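(* Let $d\ge3$, let $G$ be a $d$-map and let $\mathcal{L}$ be a $d$-GS labeling of $G$. For every inner edge $e$ of $G$, if $c_1,c_2,c_3,c_4$ are the four corners incident to $e$ listed in counterclockwise order around $e$, then the sum of the label jumps from $c_1$ to $c_2$, $c_2$ to $c_3$, $c_3$ to $c_4$ and $c_4$ to $c_1$ equals $d$.
   Context: A plane map is a connected graph (loops, multiple edges allowed) embedded in the plane without crossings, up to deformation; outer (unbounded) face, inner faces; outer vertices/edges lie on the outer face. A corner is the sector between consecutive half-edges around a vertex, inner if in an inner face; $\deg(f)$ = number of corners of face $f$. For $d\ge3$, a $d$-map has inner faces of degree $\le d$ and outer face of degree $d$ bounded by a simple cycle, with outer vertices $v_1,\dots,v_d$ in clockwise order. The four corners incident to an edge $e=\{u,v\}$ are the corners at $u$ and at $v$ on each side of $e$; they are ordered by turning counterclockwise around a small neighborhood of $e$. Label jump from $i$ to $i'$ in $[d]$: the $\delta\in\{0,\dots,d-1\}$ with $i+\delta\equiv i'\pmod d$. A $d$-GS labeling labels each inner corner in $[d]$ with (L0) corners at $v_i$ labeled $i$; (L1) around every inner vertex and every inner face, the jumps between consecutive corners in clockwise order sum to $d$; (L2) consecutive corners around an inner face have distinct labels; (L3) for each inner edge $e$ and incident face $f$, with $c,c'$ the corners of $f$ at $e$ ($c'$ following $c$ clockwise around $f$), $v$ the vertex of $c'$, $\delta$ the jump $c\to c'$ and $\epsilon$ the jump from $c'$ to the next corner clockwise around $v$ (outer corner at $v_i$ considered labeled $i$): $\delta+\epsilon>d-\deg(f)$.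 *)

theory Defs
  imports "HOL-Combinatorics.Permutations"
begin

text \<open>
Plane maps are encoded as combinatorial maps (rotation systems) of genus 0.
A finite set H of darts (half-edges); alpha is the fixed-point-free involution
pairing the two darts of an edge; sigma is the permutation giving, for a dart h
at a vertex v, the next dart CLOCKWISE around v.  Vertices are sigma-orbits,
edges are alpha-orbits.

A corner is identified with a dart h: it is the sector at the vertex of h
between h and sigma h (clockwise from h).  The next corner clockwise around the
vertex is sigma h.  The next corner clockwise around the face containing h
is fnext h = (inv sigma) (alpha h); the edge separating these two corners
is the edge of h.
\<close>

definition orb :: "('a \<Rightarrow> 'a) \<Rightarrow> 'a \<Rightarrow> 'a set" where
  "orb f x = range (\<lambda>n. (f ^^ n) x)"

definition fnext :: "('a \<Rightarrow> 'a) \<Rightarrow> ('a \<Rightarrow> 'a) \<Rightarrow> 'a \<Rightarrow> 'a" where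
  "fnext \<sigma> \<alpha> = inv \<sigma> \<circ> \<alpha>"

definition jump :: "nat \<Rightarrow> nat \<Rightarrow> nat \<Rightarrow> nat" where
  "jump d i i' = nat ((int i' - int i) mod int d)"

definition plane_map :: "'a set \<Rightarrow> ('a \<Rightarrow> 'a) \<Rightarrow> ('a \<Rightarrow> 'a) \<Rightarrow> bool" where
  "plane_map H \<alpha> \<sigma> \<longleftrightarrow>
     finite H \<and> H \<noteq> {} \<and>
     \<alpha> permutes H \<and> (\<forall>h\<in>H. \<alpha> h \<noteq> h \<and> \<alpha> (\<alpha> h) = h) \<and>
     \<sigma> permutes H \<and>
     (\<forall>h\<in>H. \<forall>h'\<in>H. (h, h') \<in> {(x, y). x \<in> H \<and> (y = \<alpha> x \<or> y = \<sigma> x)}\<^sup>*) \<and>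
     int (card (orb \<sigma> ` H)) - int (card (orb \<alpha> ` H)) + int (card (orb (fnext \<sigma> \<alpha>) ` H)) = 2"

definition outer_face :: "('a \<Rightarrow> 'a) \<Rightarrow> ('a \<Rightarrow> 'a) \<Rightarrow> 'a \<Rightarrow> 'a set" where
  "outer_face \<alpha> \<sigma> r = orb (fnext \<sigma> \<alpha>) r"

text \<open>Going around the outer face with fnext (face on the right) is counterclockwise in the
plane, so clockwise order of outer vertices follows the inverse of fnext, which is alpha o sigma.
The outer vertex v_i (i = 1..d) is the vertex of the dart (alpha o sigma)^i r (so v_d is the
vertex of r).\<close>
definition outer_vertex :: "('a \<Rightarrow> 'a) \<Rightarrow> ('a \<Rightarrow> 'a) \<Rightarrow> 'a \<Rightarrow> nat \<Rightarrow> 'a set" where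
  "outer_vertex \<alpha> \<sigma> r i = orb \<sigma> (((\<alpha> \<circ> \<sigma>) ^^ i) r)"

definition d_map :: "nat \<Rightarrow> 'a set \<Rightarrow> ('a \<Rightarrow> 'a) \<Rightarrow> ('a \<Rightarrow> 'a) \<Rightarrow> 'a \<Rightarrow> bool" where
  "d_map d H \<alpha> \<sigma> r \<longleftrightarrow>
     plane_map H \<alpha> \<sigma> \<and> r \<in> H \<and>
     card (outer_face \<alpha> \<sigma> r) = d \<and>
     inj_on (orb \<sigma>) (outer_face \<alpha> \<sigma> r) \<and>
     (\<forall>h\<in>H. h \<notin> outer_face \<alpha> \<sigma> r \<longrightarrow> card (orb (fnext \<sigma> \<alpha>) h) \<le> d)"

definition inner_edge :: "('a \<Rightarrow> 'a) \<Rightarrow> ('a \<Rightarrow> 'a) \<Rightarrow> 'a \<Rightarrow> 'a \<Rightarrow> bool" where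
  "inner_edge \<alpha> \<sigma> r h \<longleftrightarrow> h \<notin> outer_face \<alpha> \<sigma> r \<and> \<alpha> h \<notin> outer_face \<alpha> \<sigma> r"

definition ext_label :: "nat \<Rightarrow> ('a \<Rightarrow> 'a) \<Rightarrow> ('a \<Rightarrow> 'a) \<Rightarrow> 'a \<Rightarrow> ('a \<Rightarrow> nat) \<Rightarrow> 'a \<Rightarrow> nat" where
  "ext_label d \<alpha> \<sigma> r lab h =
     (if h \<in> outer_face \<alpha> \<sigma> r
      then (THE i. i \<in> {1..d} \<and> orb \<sigma> h = outer_vertex \<alpha> \<sigma> r i)
      else lab h)"

definition d_GS_labeling :: "nat \<Rightarrow> 'a set \<Rightarrow> ('a \<Rightarrow> 'a) \<Rightarrow> ('a \<Rightarrow> 'a) \<Rightarrow> 'a \<Rightarrow> ('a \<Rightarrow> nat) \<Rightarrow> bool" where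
  "d_GS_labeling d H \<alpha> \<sigma> r lab \<longleftrightarrow>
     \<comment> \<open>labels of inner corners lie in [d]\<close>
     (\<forall>h\<in>H. h \<notin> outer_face \<alpha> \<sigma> r \<longrightarrow> lab h \<in> {1..d}) \<and>
     \<comment> \<open>(L0)\<close>
     (\<forall>i\<in>{1..d}. \<forall>h\<in>H. h \<notin> outer_face \<alpha> \<sigma> r \<longrightarrow> orb \<sigma> h = outer_vertex \<alpha> \<sigma> r i \<longrightarrow> lab h = i) \<and>
     \<comment> \<open>(L1) inner vertices\<close>
     (\<forall>h\<in>H. (\<forall>i\<in>{1..d}. orb \<sigma> h \<noteq> outer_vertex \<alpha> \<sigma> r i) \<longrightarrow>
        (\<Sum>x\<in>orb \<sigma> h. jump d (lab x) (lab (\<sigma> x))) = d) \<and>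
     \<comment> \<open>(L1) inner faces\<close>
     (\<forall>h\<in>H. h \<notin> outer_face \<alpha> \<sigma> r \<longrightarrow>
        (\<Sum>x\<in>orb (fnext \<sigma> \<alpha>) h. jump d (lab x) (lab (fnext \<sigma> \<alpha> x))) = d) \<and>
     \<comment> \<open>(L2)\<close>
     (\<forall>h\<in>H. h \<notin> outer_face \<alpha> \<sigma> r \<longrightarrow> lab h \<noteq> lab (fnext \<sigma> \<alpha> h)) \<and>
     \<comment> \<open>(L3): c = h, c' = fnext h, the next corner clockwise around the vertex of c' is sigma c'\<close>
     (\<forall>h\<in>H. inner_edge \<alpha> \<sigma> r h \<longrightarrow>
        int (jump d (lab h) (lab (fnext \<sigma> \<alpha> h)))
        + int (jump d (lab (fnext \<sigma> \<alpha> h)) (ext_label d \<alpha> \<sigma> r lab (\<sigma> (fnext \<sigma> \<alpha> h))))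
        > int d - int (card (orb (fnext \<sigma> \<alpha>) h)))"

end

theory Submission
  imports Defs "HOL-Combinatorics.Orbits"
begin

text \<open>
The four label jumps around an edge form a closed walk in the cyclic group of labels, so their
sum is a multiple of d; it is positive because consecutive corners of a face carry distinct
labels (L2), hence it is at least d. On the other hand, attach to every corner c the jump to the
next corner c' around its face plus the jump from c' to the next corner around its vertex. Summed
over all corners this adds up the jump cycle of every face and of every vertex exactly once: by
(L1) inner faces and inner vertices contribute d each, by (L0) outer vertices contribute 0, and
the outer face at most d(d-1). By Euler's formula the total is at most d times the number of
edges, while each edge contributes at least d; so every edge contributes exactly d.
\<close>

lemma orb_eq_orbit: "permutation p \<Longrightarrow> orb p x = orbit p x"
  by (auto simp: orb_def orbit_altdef_permutation)

lemma self_in_orb: "x \<in> orb p x"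
  unfolding orb_def by (metis funpow_0 rangeI)

lemma orb_closed:
  assumes "y \<in> orb p x"
  shows "p y \<in> orb p x"
proof -
  from assms obtain n where "y = (p ^^ n) x" by (auto simp: orb_def)
  then have "p y = (p ^^ Suc n) x" by simp
  then show ?thesis unfolding orb_def by (rule range_eqI)
qed

lemma orb_eq_of_mem: "permutation p \<Longrightarrow> y \<in> orb p x \<Longrightarrow> orb p y = orb p x"
  by (simp add: orb_eq_orbit cyclic_on_orbit' orbit_cyclic_eq3)

lemma orb_subset: "p permutes H \<Longrightarrow> x \<in> H \<Longrightarrow> orb p x \<subseteq> H"
  unfolding orb_def by (auto intro: permutes_in_funpow_image)

lemma orb_involution:
  assumes "p (p x) = x"
  shows "orb p x = {x, p x}"
proof
  have "(p ^^ n) x \<in> {x, p x}" for n by (induction n) (auto simp: assms)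
  then show "orb p x \<subseteq> {x, p x}" unfolding orb_def by blast
  show "{x, p x} \<subseteq> orb p x" using self_in_orb[of x p] orb_closed[OF self_in_orb[of x p]] by simp
qed

lemma orb_inv: "permutation p \<Longrightarrow> orb (inv p) x = orb p x"
  by (simp add: orb_eq_orbit permutation_inverse orbit_inv_eq)

lemma orb_eq_singleton_iff: "permutation p \<Longrightarrow> orb p x = {x} \<longleftrightarrow> p x = x"
  by (simp add: orb_eq_orbit orbit_eq_singleton_iff)

lemma sum_orbits:
  assumes "finite H" and "p permutes H"
  shows "sum g H = (\<Sum>W\<in>orb p ` H. sum g W)"
proof -
  have orbit_class: "{y \<in> H. orb p y = orb p x} = orb p x" if "x \<in> H" for x
  proof (intro set_eqI iffI)
    fix y assume "y \<in> {y \<in> H. orb p y = orb p x}"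
    then show "y \<in> orb p x" using self_in_orb[of y p] by simp
  next
    fix y assume "y \<in> orb p x"
    then show "y \<in> {y \<in> H. orb p y = orb p x}"
      using orb_subset[OF assms(2) that] orb_eq_of_mem[OF permutes_imp_permutation[OF assms]]
      by auto
  qed
  have "sum g H = (\<Sum>W\<in>orb p ` H. sum g {y \<in> H. orb p y = W})"
    by (rule sum.group[OF assms(1) finite_imageI[OF assms(1)] subset_refl, symmetric])
  also have "\<dots> = (\<Sum>W\<in>orb p ` H. sum g W)"
  proof (rule sum.cong[OF refl])
    fix W assume "W \<in> orb p ` H"
    then obtain x where "x \<in> H" "W = orb p x" by blast
    then show "sum g {y \<in> H. orb p y = W} = sum g W" using orbit_class by simp
  qed
  finally show ?thesis .
qed

lemma bij_betw_funpow_orb: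
  assumes "permutation p"
  shows "bij_betw (\<lambda>i. (p ^^ i) x) {1..card (orb p x)} (orb p x)"
proof -
  define n where "n = card (orb p x)"
  have self: "x \<in> orbit p x" using assms by (rule permutation_self_in_orbit)
  define k where "k = funpow_dist1 p x x"
  have orb_k: "orb p x = (\<lambda>m. (p ^^ m) x) ` {0..<k}"
    using orbit_conv_funpow_dist1[OF self] orb_eq_orbit[OF assms] k_def by simp
  have "card (orb p x) = k"
    using orb_k card_image[OF inj_on_funpow_dist1[OF self]] k_def by simp
  then have "n = k" by (simp add: n_def)
  have period: "(p ^^ n) x = x"
    using funpow_dist1_prop[OF self] k_def \<open>n = k\<close> by simp
  have "n > 0" using \<open>n = k\<close> k_def by simp
  have "(\<lambda>i. (p ^^ i) x) ` {1..n} = (\<lambda>m. (p ^^ m) x) ` {0..<n}"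
  proof (intro set_eqI iffI)
    fix y assume "y \<in> (\<lambda>i. (p ^^ i) x) ` {1..n}"
    then obtain i where "i \<in> {1..n}" "y = (p ^^ i) x" by blast
    then show "y \<in> (\<lambda>m. (p ^^ m) x) ` {0..<n}"
      using period \<open>n > 0\<close> by (cases "i = n") (auto intro: image_eqI[of _ _ 0])
  next
    fix y assume "y \<in> (\<lambda>m. (p ^^ m) x) ` {0..<n}"
    then obtain m where "m < n" "y = (p ^^ m) x" by auto
    then show "y \<in> (\<lambda>i. (p ^^ i) x) ` {1..n}"
      using period by (cases "m = 0") (auto intro: image_eqI[of _ _ n])
  qed
  then have onto: "(\<lambda>i. (p ^^ i) x) ` {1..n} = orb p x"
    using orb_k \<open>n = k\<close> by simp
  then have "inj_on (\<lambda>i. (p ^^ i) x) {1..n}"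
    by (intro eq_card_imp_inj_on) (simp_all add: n_def)
  then show ?thesis using onto by (simp add: bij_betw_def n_def)
qed

lemma jump_less: "0 < d \<Longrightarrow> jump d a b < d"
  unfolding jump_def by (simp add: nat_less_iff)

lemma jump_self [simp]: "jump d a a = 0"
  by (simp add: jump_def)

lemma jump_pos:
  assumes "a \<in> {1..d}" and "b \<in> {1..d}" and "a \<noteq> b"
  shows "0 < jump d a b"
proof (rule ccontr)
  assume "\<not> 0 < jump d a b"
  moreover have "0 \<le> (int b - int a) mod int d" using assms(1) by simp
  ultimately have "int d dvd int b - int a"
    by (simp add: jump_def mod_eq_0_iff_dvd)
  moreover have "int b - int a \<noteq> 0" using assms(3) by simp
  ultimately have "\<bar>int d\<bar> \<le> \<bar>int b - int a\<bar>" by (rule dvd_imp_le_int[rotated])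
  with assms(1,2) show False by auto
qed

lemma dvd_jump_cycle:
  assumes "0 < d"
  shows "d dvd jump d a b + jump d b c + jump d c e + jump d e a"
proof -
  have jump_cong: "int d dvd int (jump d x y) - (int y - int x)" for x y
    using assms by (simp add: jump_def mod_eq_dvd_iff[symmetric])
  have "int (jump d a b + jump d b c + jump d c e + jump d e a)
      = (int (jump d a b) - (int b - int a)) + (int (jump d b c) - (int c - int b))
        + (int (jump d c e) - (int e - int c)) + (int (jump d e a) - (int a - int e))"
    by simp
  also have "int d dvd \<dots>" by (intro dvd_add jump_cong)
  finally show ?thesis by (simp only: of_nat_dvd_iff)
qed

lemma sum_bounded_below_tight:
  fixes f :: "'a \<Rightarrow> nat"
  assumes "finite A" and "\<And>a. a \<in> A \<Longrightarrow> c \<le> f a" and "sum f A \<le> c * card A"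
    and "a \<in> A"
  shows "f a = c"
proof (rule ccontr)
  assume "f a \<noteq> c"
  with assms(2,4) have "c < f a" by fastforce
  with assms(2,4) have "(\<Sum>_\<in>A. c) < sum f A"
    by (intro sum_strict_mono_ex1[OF assms(1)]) blast+
  moreover have "sum f A \<le> (\<Sum>_\<in>A. c)"
    using assms(3) by (simp only: sum_constant of_nat_id mult.commute)
  ultimately show False by linarith
qed

lemma fnext_permutes: "\<alpha> permutes H \<Longrightarrow> \<sigma> permutes H \<Longrightarrow> fnext \<sigma> \<alpha> permutes H"
  unfolding fnext_def by (intro permutes_compose permutes_inv)

lemma sigma_fnext: "surj \<sigma> \<Longrightarrow> \<sigma> (fnext \<sigma> \<alpha> x) = \<alpha> x"
  by (simp add: fnext_def surj_f_inv_f)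

lemma inv_fnext:
  assumes "bij \<sigma>" and "\<And>x. \<alpha> (\<alpha> x) = x"
  shows "inv (fnext \<sigma> \<alpha>) = \<alpha> \<circ> \<sigma>"
proof (rule inv_unique_comp)
  show "fnext \<sigma> \<alpha> \<circ> (\<alpha> \<circ> \<sigma>) = id"
    using assms by (simp add: fnext_def fun_eq_iff bij_is_inj)
  show "(\<alpha> \<circ> \<sigma>) \<circ> fnext \<sigma> \<alpha> = id"
    using assms by (simp add: fnext_def fun_eq_iff bij_is_surj surj_f_inv_f)
qed

locale gs_labeled_map =
  fixes d :: nat and H :: "'a set" and \<alpha> \<sigma> :: "'a \<Rightarrow> 'a" and r :: 'a and lab :: "'a \<Rightarrow> nat"
  assumes two_le_d: "2 \<le> d"
    and d_map: "d_map d H \<alpha> \<sigma> r"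
    and gs_labeling: "d_GS_labeling d H \<alpha> \<sigma> r lab"
begin

abbreviation "\<phi> \<equiv> fnext \<sigma> \<alpha>"
abbreviation "outer \<equiv> outer_face \<alpha> \<sigma> r"
abbreviation "L \<equiv> ext_label d \<alpha> \<sigma> r lab"

lemma
  shows finite_H: "finite H"
    and alpha_permutes: "\<alpha> permutes H"
    and sigma_permutes: "\<sigma> permutes H"
    and alpha_no_fixpoint: "x \<in> H \<Longrightarrow> \<alpha> x \<noteq> x"
    and alpha_involution_on: "x \<in> H \<Longrightarrow> \<alpha> (\<alpha> x) = x"
    and euler: "int (card (orb \<sigma> ` H)) - int (card (orb \<alpha> ` H)) + int (card (orb \<phi> ` H)) = 2"
    and root_in_H: "r \<in> H"
    and card_outer: "card outer = d"
    and inj_on_outer: "inj_on (orb \<sigma>) outer"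
  using d_map unfolding d_map_def plane_map_def by auto

lemma
  shows inner_label_range: "x \<in> H \<Longrightarrow> x \<notin> outer \<Longrightarrow> lab x \<in> {1..d}"
    and inner_label_at_outer_vertex: "x \<in> H \<Longrightarrow> x \<notin> outer \<Longrightarrow> i \<in> {1..d} \<Longrightarrow>
      orb \<sigma> x = outer_vertex \<alpha> \<sigma> r i \<Longrightarrow> lab x = i"
    and inner_vertex_lab_jump_sum: "x \<in> H \<Longrightarrow> orb \<sigma> x \<notin> outer_vertex \<alpha> \<sigma> r ` {1..d} \<Longrightarrow>
      (\<Sum>y\<in>orb \<sigma> x. jump d (lab y) (lab (\<sigma> y))) = d"
    and inner_face_lab_jump_sum: "x \<in> H \<Longrightarrow> x \<notin> outer \<Longrightarrow>
      (\<Sum>y\<in>orb \<phi> x. jump d (lab y) (lab (\<phi> y))) = d"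
    and inner_face_lab_distinct: "x \<in> H \<Longrightarrow> x \<notin> outer \<Longrightarrow> lab x \<noteq> lab (\<phi> x)"
  using gs_labeling unfolding d_GS_labeling_def by (simp_all, blast+)

lemma alpha_alpha [simp]: "\<alpha> (\<alpha> x) = x"
  using alpha_involution_on alpha_permutes by (cases "x \<in> H") (simp_all add: permutes_not_in)

lemma sigma_phi [simp]: "\<sigma> (\<phi> x) = \<alpha> x"
  using permutes_surj[OF sigma_permutes] by (rule sigma_fnext)

lemma phi_permutes: "\<phi> permutes H"
  using alpha_permutes sigma_permutes by (rule fnext_permutes)

lemma permutation_phi: "permutation \<phi>"
  using finite_H phi_permutes by (rule permutes_imp_permutation)

lemma permutation_sigma: "permutation \<sigma>"
  using finite_H sigma_permutes by (rule permutes_imp_permutation)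

lemma inv_phi: "inv \<phi> = \<alpha> \<circ> \<sigma>"
  using permutes_bij[OF sigma_permutes] alpha_alpha by (rule inv_fnext)

lemma outer_corner_bij: "bij_betw (\<lambda>i. ((\<alpha> \<circ> \<sigma>) ^^ i) r) {1..d} outer"
proof -
  have "outer = orb (\<alpha> \<circ> \<sigma>) r"
    unfolding outer_face_def inv_phi[symmetric] by (simp add: orb_inv permutation_phi)
  then show ?thesis
    using bij_betw_funpow_orb[of "\<alpha> \<circ> \<sigma>" r] card_outer permutation_phi
    by (simp add: permutation_inverse flip: inv_phi)
qed

lemma outer_vertex_bij: "bij_betw (outer_vertex \<alpha> \<sigma> r) {1..d} (orb \<sigma> ` outer)"
proof -
  have "outer_vertex \<alpha> \<sigma> r = orb \<sigma> \<circ> (\<lambda>i. ((\<alpha> \<circ> \<sigma>) ^^ i) r)"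
    by (simp add: outer_vertex_def fun_eq_iff)
  then show ?thesis
    using bij_betw_trans[OF outer_corner_bij inj_on_imp_bij_betw[OF inj_on_outer]] by simp
qed

lemma ex1_outer_vertex:
  assumes "y \<in> outer"
  shows "\<exists>!i. i \<in> {1..d} \<and> orb \<sigma> y = outer_vertex \<alpha> \<sigma> r i"
proof -
  have "orb \<sigma> y \<in> outer_vertex \<alpha> \<sigma> r ` {1..d}"
    using assms outer_vertex_bij by (simp add: bij_betw_def)
  moreover have "inj_on (outer_vertex \<alpha> \<sigma> r) {1..d}"
    using outer_vertex_bij by (rule bij_betw_imp_inj_on)
  ultimately show ?thesis by (metis (no_types, lifting) imageE inj_onD)
qed

lemma outer_corner_label:
  assumes "y \<in> outer"
  shows "L y \<in> {1..d}" and "orb \<sigma> y = outer_vertex \<alpha> \<sigma> r (L y)"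
  using theI'[OF ex1_outer_vertex[OF assms]] assms by (simp_all add: ext_label_def)

lemma inner_corner_label [simp]: "x \<notin> outer \<Longrightarrow> L x = lab x"
  by (simp add: ext_label_def)

lemma label_range: "x \<in> H \<Longrightarrow> L x \<in> {1..d}"
  using outer_corner_label(1) inner_label_range by (cases "x \<in> outer") simp_all

lemma label_at_outer_vertex:
  assumes "x \<in> H" and "i \<in> {1..d}" and "orb \<sigma> x = outer_vertex \<alpha> \<sigma> r i"
  shows "L x = i"
proof (cases "x \<in> outer")
  case True
  then show ?thesis
    using assms(2,3) outer_corner_label[OF True] ex1_outer_vertex[OF True] by blast
next
  case False
  then show ?thesis using assms inner_label_at_outer_vertex by simp
qed

lemma in_outer_iff: "x \<in> outer \<longleftrightarrow> orb \<phi> x = outer"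
  unfolding outer_face_def using orb_eq_of_mem[OF permutation_phi] self_in_orb by metis

lemma phi_in_outer_iff [simp]: "\<phi> x \<in> outer \<longleftrightarrow> x \<in> outer"
  using in_outer_iff orb_eq_of_mem[OF permutation_phi orb_closed[OF self_in_orb]] by metis

lemma face_jump_pos:
  assumes "x \<in> H"
  shows "0 < jump d (L x) (L (\<phi> x))"
proof (rule jump_pos)
  show "L x \<in> {1..d}" using assms by (rule label_range)
  show "L (\<phi> x) \<in> {1..d}"
    using assms permutes_in_image[OF phi_permutes] by (intro label_range) simp
  show "L x \<noteq> L (\<phi> x)"
  proof (cases "x \<in> outer")
    case True
    show ?thesis
    proof
      assume "L x = L (\<phi> x)"
      then have "orb \<sigma> x = orb \<sigma> (\<phi> x)"
        using True outer_corner_label(2) by (metis phi_in_outer_iff)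
      then have "\<phi> x = x" using True inj_on_outer by (metis inj_onD phi_in_outer_iff)
      then have "outer = {x}"
        using True in_outer_iff orb_eq_singleton_iff[OF permutation_phi] by metis
      then show False using card_outer two_le_d by simp
    qed
  next
    case False
    then show ?thesis using assms inner_face_lab_distinct by simp
  qed
qed

lemma vertex_jump_sum:
  assumes "x \<in> H"
  shows "(\<Sum>y\<in>orb \<sigma> x. jump d (L y) (L (\<sigma> y)))
    = (if orb \<sigma> x \<in> outer_vertex \<alpha> \<sigma> r ` {1..d} then 0 else d)"
proof -
  have same_vertex: "y \<in> H" "orb \<sigma> y = orb \<sigma> x" if "y \<in> orb \<sigma> x" for y
    using that orb_subset[OF sigma_permutes assms] orb_eq_of_mem[OF permutation_sigma that] by blast+
  show ?thesis
  proof (cases "orb \<sigma> x \<in> outer_vertex \<alpha> \<sigma> r ` {1..d}")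
    case True
    then obtain i where i: "i \<in> {1..d}" "orb \<sigma> x = outer_vertex \<alpha> \<sigma> r i" by blast
    have label_i: "L y = i" if "y \<in> orb \<sigma> x" for y
      using label_at_outer_vertex[of y i] same_vertex[OF that] i by simp
    have "jump d (L y) (L (\<sigma> y)) = 0" if "y \<in> orb \<sigma> x" for y
      using label_i[OF that] label_i[OF orb_closed[OF that]] by simp
    then show ?thesis using True by (simp add: sum.neutral)
  next
    case False
    have outside: "y \<notin> outer" if "y \<in> orb \<sigma> x" for y
    proof
      assume "y \<in> outer"
      then have "orb \<sigma> x \<in> outer_vertex \<alpha> \<sigma> r ` {1..d}"
        using same_vertex(2)[OF that] outer_corner_label by (metis imageI)
      with False show False by contradiction
    qed
    have "(\<Sum>y\<in>orb \<sigma> x. jump d (L y) (L (\<sigma> y)))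
        = (\<Sum>y\<in>orb \<sigma> x. jump d (lab y) (lab (\<sigma> y)))"
      using outside outside[OF orb_closed] by (intro sum.cong) simp_all
    then show ?thesis using False assms inner_vertex_lab_jump_sum by simp
  qed
qed

lemma inner_face_jump_sum:
  assumes "x \<in> H" and "x \<notin> outer"
  shows "(\<Sum>y\<in>orb \<phi> x. jump d (L y) (L (\<phi> y))) = d"
proof -
  have "y \<notin> outer" if "y \<in> orb \<phi> x" for y
    using assms(2) in_outer_iff orb_eq_of_mem[OF permutation_phi that] by metis
  then have "(\<Sum>y\<in>orb \<phi> x. jump d (L y) (L (\<phi> y)))
      = (\<Sum>y\<in>orb \<phi> x. jump d (lab y) (lab (\<phi> y)))"
    by (intro sum.cong) simp_all
  then show ?thesis using assms inner_face_lab_jump_sum by simp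
qed

lemma outer_vertices_subset: "outer_vertex \<alpha> \<sigma> r ` {1..d} \<subseteq> orb \<sigma> ` H"
proof -
  have "outer \<subseteq> H" unfolding outer_face_def by (rule orb_subset[OF phi_permutes root_in_H])
  then show ?thesis using outer_vertex_bij by (auto simp: bij_betw_def)
qed

lemma card_outer_vertices: "card (outer_vertex \<alpha> \<sigma> r ` {1..d}) = d"
  using bij_betw_imp_inj_on[OF outer_vertex_bij] by (simp add: card_image)

lemma outer_in_faces: "outer \<in> orb \<phi> ` H"
  unfolding outer_face_def using root_in_H by simp

lemma vertex_jump_total:
  "(\<Sum>x\<in>H. jump d (L x) (L (\<sigma> x))) = d * (card (orb \<sigma> ` H) - d)"
proof -
  define V where "V = orb \<sigma> ` H"
  define V_out where "V_out = outer_vertex \<alpha> \<sigma> r ` {1..d}"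
  define vsum where "vsum = (\<lambda>W. \<Sum>y\<in>W. jump d (L y) (L (\<sigma> y)))"
  have "finite V" unfolding V_def using finite_H by simp
  have "V_out \<subseteq> V" unfolding V_def V_out_def by (rule outer_vertices_subset)
  have vsum_vertex: "vsum W = (if W \<in> V_out then 0 else d)" if "W \<in> V" for W
  proof -
    obtain x where "x \<in> H" "W = orb \<sigma> x" using \<open>W \<in> V\<close> unfolding V_def by blast
    then show ?thesis by (simp add: vsum_def V_out_def vertex_jump_sum)
  qed
  have "(\<Sum>W\<in>V. vsum W) = (\<Sum>W\<in>V - V_out. vsum W) + (\<Sum>W\<in>V_out. vsum W)"
    using sum.subset_diff[OF \<open>V_out \<subseteq> V\<close> \<open>finite V\<close>] .
  also have "(\<Sum>W\<in>V_out. vsum W) = 0"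
    using \<open>V_out \<subseteq> V\<close> vsum_vertex by (intro sum.neutral) auto
  also have "(\<Sum>W\<in>V - V_out. vsum W) = (\<Sum>W\<in>V - V_out. d)"
    using vsum_vertex by (intro sum.cong) auto
  also have "\<dots> = d * (card V - d)"
    using card_Diff_subset[OF finite_subset[OF \<open>V_out \<subseteq> V\<close> \<open>finite V\<close>] \<open>V_out \<subseteq> V\<close>]
      card_outer_vertices by (simp add: V_out_def mult.commute)
  finally show ?thesis
    using sum_orbits[OF finite_H sigma_permutes, of "\<lambda>y. jump d (L y) (L (\<sigma> y))"]
    unfolding V_def vsum_def by simp
qed

lemma face_jump_total:
  "(\<Sum>x\<in>H. jump d (L x) (L (\<phi> x))) \<le> d * (d - 1) + d * (card (orb \<phi> ` H) - 1)"
proof -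
  define F where "F = orb \<phi> ` H"
  define fsum where "fsum = (\<lambda>W. \<Sum>y\<in>W. jump d (L y) (L (\<phi> y)))"
  have "finite F" unfolding F_def using finite_H by simp
  have "outer \<in> F" unfolding F_def by (rule outer_in_faces)
  have jump_le: "jump d a b \<le> d - 1" for a b
    using jump_less[of d a b] two_le_d by linarith
  have "fsum outer \<le> of_nat (card outer) * (d - 1)"
    unfolding fsum_def by (intro sum_bounded_above jump_le)
  then have "fsum outer \<le> d * (d - 1)" using card_outer by (simp add: mult.commute)
  moreover have "fsum W = d" if W: "W \<in> F - {outer}" for W
  proof -
    obtain x where "x \<in> H" "W = orb \<phi> x" "W \<noteq> outer" using W unfolding F_def by blast
    then show ?thesis using in_outer_iff inner_face_jump_sum by (simp add: fsum_def)
  qed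
  then have "(\<Sum>W\<in>F - {outer}. fsum W) = (\<Sum>W\<in>F - {outer}. d)" by (rule sum.cong[OF refl])
  ultimately have "(\<Sum>W\<in>F. fsum W) \<le> d * (d - 1) + d * (card F - 1)"
    using sum.remove[OF \<open>finite F\<close> \<open>outer \<in> F\<close>, of fsum] \<open>finite F\<close> \<open>outer \<in> F\<close>
    by (simp add: mult.commute)
  then show ?thesis
    using sum_orbits[OF finite_H phi_permutes, of "\<lambda>y. jump d (L y) (L (\<phi> y))"]
    unfolding F_def fsum_def by simp
qed

text \<open>Since \<sigma> (\<phi> x) = \<alpha> x, the two darts of an edge together give its four corner jumps.\<close>

definition half_edge_jumps :: "'a \<Rightarrow> nat" where
  "half_edge_jumps x = jump d (L x) (L (\<phi> x)) + jump d (L (\<phi> x)) (L (\<alpha> x))"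

lemma half_edge_jumps_total: "(\<Sum>x\<in>H. half_edge_jumps x) \<le> d * card (orb \<alpha> ` H)"
proof -
  let ?V = "card (orb \<sigma> ` H)" and ?E = "card (orb \<alpha> ` H)" and ?F = "card (orb \<phi> ` H)"
  have "d \<le> ?V"
    using card_mono[OF _ outer_vertices_subset] finite_H card_outer_vertices by simp
  moreover have "1 \<le> ?F"
    using outer_in_faces finite_H by (metis One_nat_def Suc_leI card_gt_0_iff empty_iff finite_imageI)
  ultimately have "(d - 1) + (?F - 1) + (?V - d) = ?E" using euler two_le_d by linarith
  have "(\<Sum>x\<in>H. half_edge_jumps x)
      = (\<Sum>x\<in>H. jump d (L x) (L (\<phi> x))) + (\<Sum>x\<in>H. jump d (L x) (L (\<sigma> x)))"
    using sum.permute[OF phi_permutes, of "\<lambda>x. jump d (L x) (L (\<sigma> x))"]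
    by (simp add: half_edge_jumps_def sum.distrib comp_def)
  also have "\<dots> \<le> d * (d - 1) + d * (?F - 1) + d * (?V - d)"
    using face_jump_total vertex_jump_total by simp
  also have "\<dots> = d * ?E"
    by (simp only: add_mult_distrib2[symmetric] \<open>(d - 1) + (?F - 1) + (?V - d) = ?E\<close>)
  finally show ?thesis .
qed

lemma edge_jumps_ge:
  assumes "x \<in> H"
  shows "d \<le> half_edge_jumps x + half_edge_jumps (\<alpha> x)"
proof (rule dvd_imp_le)
  show "d dvd half_edge_jumps x + half_edge_jumps (\<alpha> x)"
    using dvd_jump_cycle[of d "L x" "L (\<phi> x)" "L (\<alpha> x)" "L (\<phi> (\<alpha> x))"] two_le_d
    by (simp add: half_edge_jumps_def add.assoc)
  show "0 < half_edge_jumps x + half_edge_jumps (\<alpha> x)"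
    using face_jump_pos[OF assms] by (simp add: half_edge_jumps_def)
qed

lemma edge_jumps_eq:
  assumes "x \<in> H"
  shows "half_edge_jumps x + half_edge_jumps (\<alpha> x) = d"
proof -
  define esum where "esum = (\<lambda>W. \<Sum>y\<in>W. half_edge_jumps y)"
  have esum_edge: "esum (orb \<alpha> y) = half_edge_jumps y + half_edge_jumps (\<alpha> y)" if "y \<in> H" for y
  proof -
    have "y \<noteq> \<alpha> y" using alpha_no_fixpoint[OF that] by metis
    then show ?thesis by (simp add: esum_def orb_involution)
  qed
  have "esum (orb \<alpha> x) = d"
  proof (rule sum_bounded_below_tight[where f = esum and A = "orb \<alpha> ` H"])
    show "finite (orb \<alpha> ` H)" using finite_H by simp
    show "d \<le> esum W" if "W \<in> orb \<alpha> ` H" for W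
      using that edge_jumps_ge esum_edge by auto
    show "sum esum (orb \<alpha> ` H) \<le> d * card (orb \<alpha> ` H)"
      using half_edge_jumps_total sum_orbits[OF finite_H alpha_permutes, of half_edge_jumps]
      by (simp add: esum_def)
    show "orb \<alpha> x \<in> orb \<alpha> ` H" using assms by simp
  qed
  then show ?thesis using esum_edge[OF assms] by simp
qed

end

theorem mainTheorem11:
  fixes d :: nat and H :: "'a set" and \<alpha> \<sigma> :: "'a \<Rightarrow> 'a" and r :: 'a
    and lab :: "'a \<Rightarrow> nat" and h :: 'a
  assumes "d \<ge> 3"
    and "d_map d H \<alpha> \<sigma> r"
    and "d_GS_labeling d H \<alpha> \<sigma> r lab"
    and "h \<in> H"
    and "inner_edge \<alpha> \<sigma> r h"
  shows "jump d (lab h) (lab (fnext \<sigma> \<alpha> h))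
       + jump d (lab (fnext \<sigma> \<alpha> h)) (lab (\<alpha> h))
       + jump d (lab (\<alpha> h)) (lab (inv \<sigma> h))
       + jump d (lab (inv \<sigma> h)) (lab h) = d"
proof -
  have "gs_labeled_map d H \<alpha> \<sigma> r lab"
    using assms(1-3) by (simp add: gs_labeled_map_def)
  then interpret gs_labeled_map d H \<alpha> \<sigma> r lab .
  have "h \<notin> outer" and "\<alpha> h \<notin> outer"
    using assms(5) by (simp_all add: inner_edge_def)
  moreover have "\<phi> (\<alpha> h) = inv \<sigma> h" by (simp add: fnext_def)
  ultimately have "inv \<sigma> h \<notin> outer" using phi_in_outer_iff by metis
  then show ?thesis
    using edge_jumps_eq[OF assms(4)] \<open>h \<notin> outer\<close> \<open>\<alpha> h \<notin> outer\<close> \<open>\<phi> (\<alpha> h) = inv \<sigma> h\<close>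
    by (simp add: half_edge_jumps_def add.assoc)
qed

end
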